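(* Let $\sigma$ be a signature containing $\triangleright$ and let $\mathcal{A}$ be a $\sigma$-algebra that is representable by partial functions and whose atoms are separating. Then $\lhd$ is completely left-distributive over joins: for every $S\subseteq\mathcal{A}$ such that $\bigvee S$ exists and every $a\in\mathcal{A}$, $\bigvee\{a\lhd s : s\in S\}$ exists and equals $a \lhd \bigvee S$.
   Context: Signatures $\sigma$ are sets of operation symbols drawn from: $\triangleright$ (antidomain restriction), $;$ (composition), $\wedge$ (intersection), $\mathrm{upd}$ (update), $\sqcup$ (preferential union), $\mathsf{D}$ (domain), $\mathsf{A}$ (antidomain), interpreted on partial functions as: $f \triangleright g = \{(x,y) \in g : x \notin \mathrm{dom}(f)\}$; $f;g$ = relational composition ($f$ first); $f\wedge g = f\cap g$; $\mathrm{upd}(f,g)(x)$ is $f(x)$ if $f(x)$ defined and $g(x)$ undefined, $g(x)$ if both defined, undefined otherwise; $(f\sqcup g)(x)$ is $f(x)$ if defined, else $g(x)$; $\mathsf{D}(f)$ = identity on $\mathrm{dom}(f)$; $\mathsf{A}(f)$ = identity on the complement of $\mathrm{dom}(f)$ in the base. $\mathcal{A}$ is representable if isomorphic to a $\sigma$-algebra of partial functions with these operations. Define $0 := a\triangleright a$, $a\lhd b := (a\triangleright b)\triangleright b$ (restriction of $b$ to the domain of $a$), $a \le b :\iff a\lhd b = a$. An atom is a minimal nonzero element; atoms are separating if whenever $a\not\le b$ there is an atom $c\le a$ with $c\not\le b$. *)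

theory Defs
  imports Main
begin

datatype sym = AntiRes | Comp | Meet | Upd | Pref | Dom | ADom

section \<open>Abstract algebras (all operations present; only those in the signature matter)\<close>

record 'a alg =
  carrier :: "'a set"
  ares :: "'a \<Rightarrow> 'a \<Rightarrow> 'a"
  comp :: "'a \<Rightarrow> 'a \<Rightarrow> 'a"
  meet :: "'a \<Rightarrow> 'a \<Rightarrow> 'a"
  upd  :: "'a \<Rightarrow> 'a \<Rightarrow> 'a"
  pref :: "'a \<Rightarrow> 'a \<Rightarrow> 'a"
  dom_op :: "'a \<Rightarrow> 'a"
  adom_op :: "'a \<Rightarrow> 'a"

definition sigma_algebra :: "sym set \<Rightarrow> 'a alg \<Rightarrow> bool" where
  "sigma_algebra \<sigma> A \<longleftrightarrow>
     (AntiRes \<in> \<sigma> \<longrightarrow> (\<forall>x\<in>carrier A. \<forall>y\<in>carrier A. ares A x y \<in> carrier A)) \<and>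
     (Comp \<in> \<sigma> \<longrightarrow> (\<forall>x\<in>carrier A. \<forall>y\<in>carrier A. comp A x y \<in> carrier A)) \<and>
     (Meet \<in> \<sigma> \<longrightarrow> (\<forall>x\<in>carrier A. \<forall>y\<in>carrier A. meet A x y \<in> carrier A)) \<and>
     (Upd \<in> \<sigma> \<longrightarrow> (\<forall>x\<in>carrier A. \<forall>y\<in>carrier A. upd A x y \<in> carrier A)) \<and>
     (Pref \<in> \<sigma> \<longrightarrow> (\<forall>x\<in>carrier A. \<forall>y\<in>carrier A. pref A x y \<in> carrier A)) \<and>
     (Dom \<in> \<sigma> \<longrightarrow> (\<forall>x\<in>carrier A. dom_op A x \<in> carrier A)) \<and>
     (ADom \<in> \<sigma> \<longrightarrow> (\<forall>x\<in>carrier A. adom_op A x \<in> carrier A))"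

definition pf_ares :: "('b \<rightharpoonup> 'b) \<Rightarrow> ('b \<rightharpoonup> 'b) \<Rightarrow> ('b \<rightharpoonup> 'b)" where
  "pf_ares f g = (\<lambda>x. if f x = None then g x else None)"

definition pf_comp :: "('b \<rightharpoonup> 'b) \<Rightarrow> ('b \<rightharpoonup> 'b) \<Rightarrow> ('b \<rightharpoonup> 'b)" where
  "pf_comp f g = (\<lambda>x. case f x of None \<Rightarrow> None | Some y \<Rightarrow> g y)"

definition pf_meet :: "('b \<rightharpoonup> 'b) \<Rightarrow> ('b \<rightharpoonup> 'b) \<Rightarrow> ('b \<rightharpoonup> 'b)" where
  "pf_meet f g = (\<lambda>x. if f x = g x then f x else None)"

definition pf_upd :: "('b \<rightharpoonup> 'b) \<Rightarrow> ('b \<rightharpoonup> 'b) \<Rightarrow> ('b \<rightharpoonup> 'b)" where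
  "pf_upd f g = (\<lambda>x. if f x = None then None else (if g x = None then f x else g x))"

definition pf_pref :: "('b \<rightharpoonup> 'b) \<Rightarrow> ('b \<rightharpoonup> 'b) \<Rightarrow> ('b \<rightharpoonup> 'b)" where
  "pf_pref f g = (\<lambda>x. if f x = None then g x else f x)"

definition pf_dom :: "('b \<rightharpoonup> 'b) \<Rightarrow> ('b \<rightharpoonup> 'b)" where
  "pf_dom f = (\<lambda>x. if f x = None then None else Some x)"

definition pf_adom :: "'b set \<Rightarrow> ('b \<rightharpoonup> 'b) \<Rightarrow> ('b \<rightharpoonup> 'b)" where
  "pf_adom X f = (\<lambda>x. if x \<in> X \<and> f x = None then Some x else None)"

definition representation ::
  "sym set \<Rightarrow> 'a alg \<Rightarrow> 'b set \<Rightarrow> ('a \<Rightarrow> ('b \<rightharpoonup> 'b)) \<Rightarrow> bool" where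
  "representation \<sigma> A X h \<longleftrightarrow>
     inj_on h (carrier A) \<and>
     (\<forall>x\<in>carrier A. dom (h x) \<subseteq> X \<and> ran (h x) \<subseteq> X) \<and>
     (AntiRes \<in> \<sigma> \<longrightarrow> (\<forall>x\<in>carrier A. \<forall>y\<in>carrier A. h (ares A x y) = pf_ares (h x) (h y))) \<and>
     (Comp \<in> \<sigma> \<longrightarrow> (\<forall>x\<in>carrier A. \<forall>y\<in>carrier A. h (comp A x y) = pf_comp (h x) (h y))) \<and>
     (Meet \<in> \<sigma> \<longrightarrow> (\<forall>x\<in>carrier A. \<forall>y\<in>carrier A. h (meet A x y) = pf_meet (h x) (h y))) \<and>
     (Upd \<in> \<sigma> \<longrightarrow> (\<forall>x\<in>carrier A. \<forall>y\<in>carrier A. h (upd A x y) = pf_upd (h x) (h y))) \<and>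
     (Pref \<in> \<sigma> \<longrightarrow> (\<forall>x\<in>carrier A. \<forall>y\<in>carrier A. h (pref A x y) = pf_pref (h x) (h y))) \<and>
     (Dom \<in> \<sigma> \<longrightarrow> (\<forall>x\<in>carrier A. h (dom_op A x) = pf_dom (h x))) \<and>
     (ADom \<in> \<sigma> \<longrightarrow> (\<forall>x\<in>carrier A. h (adom_op A x) = pf_adom X (h x)))"

definition representable_on :: "sym set \<Rightarrow> 'a alg \<Rightarrow> 'b itself \<Rightarrow> bool" where
  "representable_on \<sigma> A _ \<longleftrightarrow> (\<exists>(X::'b set) h. representation \<sigma> A X h)"

definition alg_zero_of :: "'a alg \<Rightarrow> 'a \<Rightarrow> 'a" where
  "alg_zero_of A a = ares A a a"

definition lres :: "'a alg \<Rightarrow> 'a \<Rightarrow> 'a \<Rightarrow> 'a" where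
  "lres A a b = ares A (ares A a b) b"

definition leq :: "'a alg \<Rightarrow> 'a \<Rightarrow> 'a \<Rightarrow> bool" where
  "leq A a b \<longleftrightarrow> lres A a b = a"

definition is_atom :: "'a alg \<Rightarrow> 'a \<Rightarrow> bool" where
  "is_atom A c \<longleftrightarrow> c \<in> carrier A \<and> c \<noteq> alg_zero_of A c \<and>
     (\<forall>d\<in>carrier A. leq A d c \<and> d \<noteq> alg_zero_of A d \<longrightarrow> d = c)"

definition atoms_separating :: "'a alg \<Rightarrow> bool" where
  "atoms_separating A \<longleftrightarrow>
     (\<forall>a\<in>carrier A. \<forall>b\<in>carrier A. \<not> leq A a b \<longrightarrow>
        (\<exists>c. is_atom A c \<and> leq A c a \<and> \<not> leq A c b))"

definition is_join :: "'a alg \<Rightarrow> 'a set \<Rightarrow> 'a \<Rightarrow> bool" where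
  "is_join A S j \<longleftrightarrow> j \<in> carrier A \<and> (\<forall>s\<in>S. leq A s j) \<and>
     (\<forall>u\<in>carrier A. (\<forall>s\<in>S. leq A s u) \<longrightarrow> leq A j u)"

end

theory Submission
  imports Defs
begin

text \<open>Transport everything along a representation h: antidomain restriction becomes
  restriction of a map to the complement of a domain, so a \<lhd> b is h b |` dom (h a), the order is
  map inclusion and the zero elements are the empty maps. Suppose u bounds every a \<lhd> s with s in S
  but not a \<lhd> j; separation gives an atom c \<le> a \<lhd> j with c not below u. An atom below j
  that meets some s in S lies below s, hence below a \<lhd> s \<le> u; so c is disjoint from every member
  of S. Then c \<triangleright> j is still an upper bound of S, hence above j, which makes c disjoint
  from j and therefore zero.\<close>

lemma restrict_map_dom_eq_iff_map_le: "g |` dom f = f \<longleftrightarrow> f \<subseteq>\<^sub>m g"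
  unfolding map_le_def restrict_map_def fun_eq_iff by (metis domIff)

lemma restrict_map_mono: "f \<subseteq>\<^sub>m g \<Longrightarrow> f |` B \<subseteq>\<^sub>m g |` B"
  by (auto simp: map_le_def restrict_map_def domIff)

locale antires_representation =
  fixes \<sigma> :: "sym set" and A :: "'a alg" and X :: "'b set" and h :: "'a \<Rightarrow> ('b \<rightharpoonup> 'b)"
  assumes antires_in_sig: "AntiRes \<in> \<sigma>"
    and sig_alg: "sigma_algebra \<sigma> A"
    and rep: "representation \<sigma> A X h"
begin

lemma ares_closed: "x \<in> carrier A \<Longrightarrow> y \<in> carrier A \<Longrightarrow> ares A x y \<in> carrier A"
  using antires_in_sig sig_alg unfolding sigma_algebra_def by blast

lemma lres_closed: "x \<in> carrier A \<Longrightarrow> y \<in> carrier A \<Longrightarrow> lres A x y \<in> carrier A"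
  unfolding lres_def by (intro ares_closed)

lemma inj_h: "inj_on h (carrier A)"
  using rep unfolding representation_def by blast

lemma h_ares: "x \<in> carrier A \<Longrightarrow> y \<in> carrier A \<Longrightarrow> h (ares A x y) = h y |` (- dom (h x))"
  using antires_in_sig rep
  by (auto simp: representation_def pf_ares_def restrict_map_def fun_eq_iff)

lemma h_lres: "x \<in> carrier A \<Longrightarrow> y \<in> carrier A \<Longrightarrow> h (lres A x y) = h y |` dom (h x)"
  by (auto simp: lres_def h_ares ares_closed restrict_map_def fun_eq_iff domIff)

lemma leq_iff_map_le: "x \<in> carrier A \<Longrightarrow> y \<in> carrier A \<Longrightarrow> leq A x y \<longleftrightarrow> h x \<subseteq>\<^sub>m h y"
  unfolding leq_def
  by (metis h_lres inj_h inj_on_eq_iff lres_closed restrict_map_dom_eq_iff_map_le)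

lemma zero_iff_empty: "d \<in> carrier A \<Longrightarrow> d = alg_zero_of A d \<longleftrightarrow> h d = Map.empty"
proof -
  assume d: "d \<in> carrier A"
  have "h (alg_zero_of A d) = Map.empty"
    unfolding alg_zero_of_def by (simp add: h_ares[OF d d] restrict_map_def fun_eq_iff domIff)
  then show ?thesis
    using inj_on_eq_iff[OF inj_h d ares_closed[OF d d]] by (simp add: alg_zero_of_def)
qed

lemma atom_map_le_if_meets:
  assumes c: "is_atom A c" and s: "s \<in> carrier A"
    and "h c \<subseteq>\<^sub>m m" and "h s \<subseteq>\<^sub>m m" and meets: "dom (h c) \<inter> dom (h s) \<noteq> {}"
  shows "h c \<subseteq>\<^sub>m h s"
proof -
  have cc: "c \<in> carrier A"
    and minimal: "\<And>d. d \<in> carrier A \<Longrightarrow> leq A d c \<Longrightarrow> d \<noteq> alg_zero_of A d \<Longrightarrow> d = c"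
    using c unfolding is_atom_def by blast+
  have "h (lres A s c) \<subseteq>\<^sub>m h c"
    by (auto simp: h_lres s cc map_le_def restrict_map_def domIff)
  moreover have "h (lres A s c) \<noteq> Map.empty"
    using meets by (auto simp: h_lres s cc restrict_map_def fun_eq_iff)
  ultimately have "lres A s c = c"
    using minimal lres_closed[OF s cc] leq_iff_map_le[OF lres_closed[OF s cc] cc]
      zero_iff_empty[OF lres_closed[OF s cc]] by blast
  then have "dom (h c) \<subseteq> dom (h s)"
    using h_lres[OF s cc] by (metis dom_restrict inf.cobounded2)
  with assms(3,4) show ?thesis
    unfolding map_le_def by (metis domI subsetD)
qed

lemma disjoint_from_join:
  assumes "S \<subseteq> carrier A" and join: "is_join A S j" and c: "c \<in> carrier A"
    and disjoint: "\<forall>s\<in>S. dom (h c) \<inter> dom (h s) = {}"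
  shows "dom (h c) \<inter> dom (h j) = {}"
proof -
  have jc: "j \<in> carrier A"
    using join unfolding is_join_def by blast
  have "leq A s (ares A c j)" if "s \<in> S" for s
  proof -
    have "s \<in> carrier A" "leq A s j"
      using that assms(1) join unfolding is_join_def by blast+
    then show ?thesis
      using disjoint that
      by (auto simp: leq_iff_map_le ares_closed c jc h_ares map_le_def restrict_map_def)
  qed
  then have "h j \<subseteq>\<^sub>m h (ares A c j)"
    using join ares_closed[OF c jc] leq_iff_map_le[OF jc ares_closed[OF c jc]]
    unfolding is_join_def by blast
  then show ?thesis
    using map_le_implies_dom_le by (fastforce simp: h_ares c jc)
qed

lemma is_join_lres:
  assumes sep: "atoms_separating A" and S: "S \<subseteq> carrier A" and join: "is_join A S j"
    and a: "a \<in> carrier A"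
  shows "is_join A {lres A a s | s. s \<in> S} (lres A a j)"
  unfolding is_join_def
proof (intro conjI ballI impI)
  have jc: "j \<in> carrier A" and below_j: "\<And>s. s \<in> S \<Longrightarrow> h s \<subseteq>\<^sub>m h j"
    using join S leq_iff_map_le unfolding is_join_def by blast+
  show ajc: "lres A a j \<in> carrier A"
    using a jc by (rule lres_closed)
  show "leq A t (lres A a j)" if t_in: "t \<in> {lres A a s | s. s \<in> S}" for t
  proof -
    obtain s where "s \<in> S" and t: "t = lres A a s"
      using t_in by blast
    then have "s \<in> carrier A" and "h s \<subseteq>\<^sub>m h j"
      using S below_j by blast+
    then show ?thesis
      by (simp add: t leq_iff_map_le lres_closed a jc h_lres restrict_map_mono)
  qed
  show "leq A (lres A a j) u"
    if u: "u \<in> carrier A" and bound: "\<forall>t\<in>{lres A a s | s. s \<in> S}. leq A t u" for u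
  proof (rule ccontr)
    assume "\<not> leq A (lres A a j) u"
    then obtain c where atom: "is_atom A c" and "leq A c (lres A a j)" and c_not_u: "\<not> leq A c u"
      using sep ajc u unfolding atoms_separating_def by blast
    then have cc: "c \<in> carrier A" and c_below: "h c \<subseteq>\<^sub>m h j |` dom (h a)"
      by (auto simp: is_atom_def leq_iff_map_le ajc h_lres a jc)
    then have c_below_j: "h c \<subseteq>\<^sub>m h j" and c_in_a: "dom (h c) \<subseteq> dom (h a)"
      by (auto simp: map_le_def restrict_map_def split: if_splits)
    have "dom (h c) \<inter> dom (h s) = {}" if s: "s \<in> S" for s
    proof (rule ccontr)
      assume meets: "dom (h c) \<inter> dom (h s) \<noteq> {}"
      have sc: "s \<in> carrier A"
        using S s by blast
      from meets have "h c \<subseteq>\<^sub>m h s"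
        using atom_map_le_if_meets atom S s c_below_j below_j by blast
      then have "h c \<subseteq>\<^sub>m h (lres A a s)"
        using c_in_a by (auto simp: h_lres a sc map_le_def restrict_map_def)
      moreover have "h (lres A a s) \<subseteq>\<^sub>m h u"
        using bound s u by (auto simp: leq_iff_map_le lres_closed a sc)
      ultimately show False
        using c_not_u cc u by (auto simp: leq_iff_map_le dest: map_le_trans)
    qed
    then have "dom (h c) \<inter> dom (h j) = {}"
      using disjoint_from_join S join cc by blast
    moreover have "dom (h c) \<noteq> {}"
      using atom zero_iff_empty cc unfolding is_atom_def by simp
    ultimately show False
      using map_le_implies_dom_le[OF c_below_j] by blast
  qed
qed

end

theorem lemma5p7:
  fixes \<sigma> :: "sym set" and A :: "'a alg" and S :: "'a set" and j a :: 'a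
  assumes "AntiRes \<in> \<sigma>"
    and "sigma_algebra \<sigma> A"
    and "representable_on \<sigma> A TYPE('b)"
    and "atoms_separating A"
    and "S \<subseteq> carrier A"
    and "is_join A S j"
    and "a \<in> carrier A"
  shows "is_join A {lres A a s | s. s \<in> S} (lres A a j)"
proof -
  obtain X and h :: "'a \<Rightarrow> ('b \<rightharpoonup> 'b)" where "representation \<sigma> A X h"
    using assms(3) unfolding representable_on_def by blast
  then interpret antires_representation \<sigma> A X h
    using assms(1,2) by unfold_locales
  show ?thesis
    using is_join_lres assms(4-7) .
qed

end
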